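(* The maps $\mu^\bullet X$ do not satisfy the monad associativity law on the whole capacity functor: there exist a compactum $X$ and a capacity $\gimel\in M(M(MX))$ such that $$\mu^\bullet X\circ \mu^\bullet (MX)(\gimel)\neq \mu^\bullet X\circ M(\mu^\bullet X)(\gimel).$$ (In fact one can take $X=\{a,b\}$ to be the two-point discrete space; the two sides then differ on the closed set $\{a\}$.)
   Context: A compactum is a compact Hausdorff space; $I=[0,1]$; $\mathcal F(X)$ denotes the family of closed subsets of $X$. An (upper-semicontinuous) capacity on a compactum $X$ is a function $\nu:\mathcal F(X)\to I$ such that: (1) $\nu(X)=1$, $\nu(\emptyset)=0$; (2) if $F\subset G$ then $\nu(F)\le\nu(G)$; (3) if $\nu(F)<a$ then there is an open set $O\supset F$ with $\nu(B)<a$ for every closed $B\subset O$. For open $U\subset X$ one puts $\nu(U)=\sup\{\nu(K): K\text{ closed},\ K\subset U\}$. $MX$ is the set of all capacities on $X$, topologized by the subbase consisting of the sets $\{c\in MX: c(F)<a\}$ ($F$ closed, $a\in I$) and $\{c\in MX: c(U)>a\}$ ($U$ open, $a\in I$); with this topology $MX$ is a compactum. For a continuous map $f:X\to Y$ of compacta, $Mf:MX\to MY$ is $Mf(c)(F)=c(f^{-1}(F))$. For a closed $F\subset X$ and $t\in I$ put $F_t=\{c\in MX: c(F)\ge t\}$, a closed subset of $MX$. The map $\mu^\bullet X: M(MX)\to MX$ is defined by $\mu^\bullet X(\mathcal C)(F)=\max\{\mathcal C(F_t)\cdot t: t\in(0,1]\}$ for $\mathcal C\in M(MX)$ and closed $F\subset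 X$ (the maximum exists). *)

theory Defs
  imports "HOL-Analysis.Analysis"
begin

definition compactum :: "'a topology \<Rightarrow> bool" where
  "compactum X \<longleftrightarrow> compact_space X \<and> Hausdorff_space X"

text \<open>Capacities on X, represented as functions on subsets of the carrier that are
  meaningful on closed sets only; normalised to 0 on non-closed sets so that
  every capacity has a unique representative.\<close>
definition capacity :: "'a topology \<Rightarrow> ('a set \<Rightarrow> real) \<Rightarrow> bool" where
  "capacity X c \<longleftrightarrow>
     (\<forall>S. \<not> closedin X S \<longrightarrow> c S = 0) \<and>
     (\<forall>F. closedin X F \<longrightarrow> 0 \<le> c F \<and> c F \<le> 1) \<and>
     c (topspace X) = 1 \<and> c {} = 0 \<and>
     (\<forall>F G. closedin X F \<and> closedin X G \<and> F \<subseteq> G \<longrightarrow> c F \<le> c G) \<and>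
     (\<forall>F a. closedin X F \<and> c F < a \<longrightarrow>
        (\<exists>W. openin X W \<and> F \<subseteq> W \<and> (\<forall>B. closedin X B \<and> B \<subseteq> W \<longrightarrow> c B < a)))"

definition caps :: "'a topology \<Rightarrow> ('a set \<Rightarrow> real) set" where
  "caps X = {c. capacity X c}"

definition cap_open :: "'a topology \<Rightarrow> ('a set \<Rightarrow> real) \<Rightarrow> 'a set \<Rightarrow> real" where
  "cap_open X c U = Sup {c K | K. closedin X K \<and> K \<subseteq> U}"

definition cap_top :: "'a topology \<Rightarrow> ('a set \<Rightarrow> real) topology" where
  "cap_top X = topology_generated_by
     ({caps X} \<union>
      {{c \<in> caps X. c F < a} | F a. closedin X F \<and> 0 \<le> a \<and> a \<le> 1} \<union>
      {{c \<in> caps X. cap_open X c U > a} | U a. openin X U \<and> 0 \<le> a \<and> a \<le> 1})"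

definition cap_map :: "'a topology \<Rightarrow> 'b topology \<Rightarrow> ('a \<Rightarrow> 'b) \<Rightarrow> ('a set \<Rightarrow> real) \<Rightarrow> ('b set \<Rightarrow> real)" where
  "cap_map X Y f c = (\<lambda>F. if closedin Y F then c (f -` F \<inter> topspace X) else 0)"

definition cap_level :: "'a topology \<Rightarrow> 'a set \<Rightarrow> real \<Rightarrow> ('a set \<Rightarrow> real) set" where
  "cap_level X F t = {c \<in> caps X. c F \<ge> t}"

text \<open>The map mu-bullet X from M(MX) to MX (the max exists, so it equals the sup).\<close>
definition mu_bullet :: "'a topology \<Rightarrow> (('a set \<Rightarrow> real) set \<Rightarrow> real) \<Rightarrow> ('a set \<Rightarrow> real)" where
  "mu_bullet X C = (\<lambda>F. if closedin X F
      then Sup {C (cap_level X F t) * t | t. t \<in> {0<..1}} else 0)"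

end

theory Submission
  imports Defs
begin

text \<open>Let \<open>X = {0, 1}\<close> and let \<open>c\<^sub>s\<close> be the capacity with \<open>c\<^sub>s{0} = s\<close>, \<open>c\<^sub>s{1} = 0\<close>.
  Take \<open>\<C>\<^sub>1 = \<delta>(c\<^sub>1\<^sub>/\<^sub>2)\<close>, \<open>\<C>\<^sub>2 = max(\<delta>(c\<^sub>0), \<delta>(c\<^sub>1)/2)\<close> in \<open>M(MX)\<close>, and let \<open>\<G>\<close> be the
  capacity on \<open>M(MX)\<close> that is 1 exactly on closed sets containing both. Then \<open>\<mu>\<^sup>\<bullet>(MX)(\<G>)\<close>
  only sees \<open>min(\<C>\<^sub>1, \<C>\<^sub>2)\<close>, which on the levels \<open>{0}\<^sub>u\<close> is at most \<open>1/2\<close> and vanishes for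
  \<open>u > 1/2\<close>, so the left-hand side gives \<open>{0}\<close> at most \<open>1/4\<close>. On the other hand
  \<open>\<mu>\<^sup>\<bullet>X(\<C>\<^sub>1){0}\<close> and \<open>\<mu>\<^sup>\<bullet>X(\<C>\<^sub>2){0}\<close> are both \<open>1/2\<close>, so \<open>M(\<mu>\<^sup>\<bullet>X)(\<G>)\<close> gives the level
  \<open>{0}\<^sub>1\<^sub>/\<^sub>2\<close> mass 1 (its preimage is closed because \<open>\<mu>\<^sup>\<bullet>X\<close> is upper semicontinuous), and the
  right-hand side gives \<open>{0}\<close> at least \<open>1/2\<close>.\<close>

section \<open>The topology on capacities\<close>

lemma topspace_cap_top [simp]: "topspace (cap_top X) = caps X"
  unfolding cap_top_def by auto

lemma openin_cap_top_caps [simp]: "openin (cap_top X) (caps X)"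
  using openin_topspace[of "cap_top X"] by simp

lemma capsD:
  assumes "c \<in> caps X"
  shows "\<And>S. \<not> closedin X S \<Longrightarrow> c S = 0"
    and "\<And>F. closedin X F \<Longrightarrow> 0 \<le> c F" and "\<And>F. closedin X F \<Longrightarrow> c F \<le> 1"
    and "c (topspace X) = 1" and "c {} = 0"
    and "\<And>F G. closedin X F \<Longrightarrow> closedin X G \<Longrightarrow> F \<subseteq> G \<Longrightarrow> c F \<le> c G"
    and "\<And>F a. closedin X F \<Longrightarrow> c F < a \<Longrightarrow>
           \<exists>W. openin X W \<and> F \<subseteq> W \<and> (\<forall>B. closedin X B \<and> B \<subseteq> W \<longrightarrow> c B < a)"
  using assms unfolding caps_def capacity_def by auto

lemma caps_nonneg: "c \<in> caps X \<Longrightarrow> 0 \<le> c S"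
  by (metis capsD(1,2) order_refl)

lemma caps_le_one: "c \<in> caps X \<Longrightarrow> c S \<le> 1"
  by (metis capsD(1,3) zero_le_one)

lemma openin_cap_top_less:
  assumes "closedin X F"
  shows "openin (cap_top X) {c \<in> caps X. c F < a}"
proof (cases "0 \<le> a \<and> a \<le> 1")
  case True
  then show ?thesis
    unfolding cap_top_def by (intro topology_generated_by_Basis) (use assms in blast)
next
  case False
  then consider "a < 0" | "1 < a" by linarith
  then show ?thesis
  proof cases
    case 1
    then have "{c \<in> caps X. c F < a} = {}"
      using caps_nonneg[of _ X F] by fastforce
    then show ?thesis by (simp only: openin_empty)
  next
    case 2
    then have "{c \<in> caps X. c F < a} = caps X"
      using caps_le_one[of _ X F] by fastforce
    then show ?thesis by simp
  qed
qed

lemma openin_cap_top_greater: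
  assumes "openin X U" "0 \<le> a" "a \<le> 1"
  shows "openin (cap_top X) {c \<in> caps X. cap_open X c U > a}"
  unfolding cap_top_def by (intro topology_generated_by_Basis) (use assms in blast)

lemma closedin_cap_level:
  assumes "closedin X F"
  shows "closedin (cap_top X) (cap_level X F t)"
proof -
  have "caps X - cap_level X F t = {c \<in> caps X. c F < t}"
    unfolding cap_level_def by auto
  then show ?thesis
    using openin_cap_top_less[OF assms] unfolding closedin_def cap_level_def by auto
qed

text \<open>Two distinct capacities differ on some closed set \<open>S\<close>; they are then separated
  either by a subbasic set \<open>c S < a\<close> or, via the upper semicontinuity of the smaller one,
  by a subbasic set \<open>c W > a\<close> for an open \<open>W \<supseteq> S\<close>.\<close>
lemma t1_space_cap_top: "t1_space (cap_top X)"
  unfolding t1_space_closedin_singleton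
proof
  fix c assume "c \<in> topspace (cap_top X)"
  then have c: "c \<in> caps X" by simp
  have "openin (cap_top X) (caps X - {c})"
  proof (subst openin_subopen, intro ballI)
    fix d assume d: "d \<in> caps X - {c}"
    then obtain S where S: "d S \<noteq> c S" by auto
    have S_closed: "closedin X S"
      using S capsD(1)[OF c] capsD(1)[of d X] d by (metis DiffD1)
    show "\<exists>T. openin (cap_top X) T \<and> d \<in> T \<and> T \<subseteq> caps X - {c}"
    proof (cases "d S < c S")
      case True
      then show ?thesis using d openin_cap_top_less[OF S_closed, of "(d S + c S) / 2"]
        by (intro exI[of _ "{e \<in> caps X. e S < (d S + c S) / 2}"]) auto
    next
      case False
      with S have less: "c S < d S" by auto
      define a where "a = (2 * c S + d S) / 3"
      define b where "b = (c S + 2 * d S) / 3"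
      have "c S < a" "a < b" "b < d S"
        using less unfolding a_def b_def by auto
      then obtain W where W: "openin X W" "S \<subseteq> W" "\<And>B. closedin X B \<Longrightarrow> B \<subseteq> W \<Longrightarrow> c B < a"
        using capsD(7)[of c X S a] c S_closed by auto
      have "cap_open X c W \<le> a"
        unfolding cap_open_def by (rule cSup_least) (use W(3) in fastforce)+
      moreover have "d S \<le> cap_open X d W"
        unfolding cap_open_def
      proof (rule cSup_upper)
        show "bdd_above {d K |K. closedin X K \<and> K \<subseteq> W}"
          using caps_le_one[of d X] d by (intro bdd_aboveI[of _ 1]) auto
      qed (use S_closed W(2) in auto)
      moreover have "0 \<le> b" "b \<le> 1"
        using caps_nonneg[of c X S] caps_le_one[of d X S] c d less unfolding b_def by auto
      ultimately show ?thesis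
        using \<open>a < b\<close> \<open>b < d S\<close> d openin_cap_top_greater[OF W(1)]
        by (intro exI[of _ "{e \<in> caps X. cap_open X e W > b}"]) auto
    qed
  qed
  then show "closedin (cap_top X) {c}"
    using c unfolding closedin_def by auto
qed

section \<open>Examples of capacities\<close>

text \<open>The capacity \<open>max(\<delta>\<^sub>p, r \<delta>\<^sub>q)\<close>; for \<open>p = q\<close> it is the Dirac capacity at \<open>p\<close>.\<close>
definition cap_max_dirac :: "'a topology \<Rightarrow> 'a \<Rightarrow> 'a \<Rightarrow> real \<Rightarrow> 'a set \<Rightarrow> real" where
  "cap_max_dirac X p q r F =
     (if closedin X F then (if p \<in> F then 1 else if q \<in> F then r else 0) else 0)"

definition cap_min_dirac :: "'a topology \<Rightarrow> 'a \<Rightarrow> 'a \<Rightarrow> 'a set \<Rightarrow> real" where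
  "cap_min_dirac X p q F = (if closedin X F \<and> p \<in> F \<and> q \<in> F then 1 else 0)"

lemma cap_max_dirac_in_caps:
  assumes X: "t1_space X" and p: "p \<in> topspace X" and q: "q \<in> topspace X"
    and r: "0 \<le> r" "r \<le> 1"
  shows "cap_max_dirac X p q r \<in> caps X"
  unfolding caps_def capacity_def mem_Collect_eq
proof (intro conjI allI impI)
  fix F a assume "closedin X F \<and> cap_max_dirac X p q r F < a"
  then have F: "closedin X F" and less: "cap_max_dirac X p q r F < a" by auto
  have F_sub: "F \<subseteq> topspace X" using F closedin_subset by auto
  have open_minus: "openin X (topspace X - {x})" if "x \<in> topspace X" for x
    using closedin_t1_singleton[OF X that] by (simp add: openin_diff)
  consider "1 < a" | "p \<notin> F" "q \<in> F" "r < a" | "p \<notin> F" "q \<notin> F" "0 < a"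
    using less F by (fastforce simp: cap_max_dirac_def split: if_splits)
  then show "\<exists>W. openin X W \<and> F \<subseteq> W \<and>
      (\<forall>B. closedin X B \<and> B \<subseteq> W \<longrightarrow> cap_max_dirac X p q r B < a)"
  proof cases
    case 1
    then show ?thesis using r F_sub
      by (intro exI[of _ "topspace X"]) (auto simp: cap_max_dirac_def)
  next
    case 2
    then show ?thesis using r F_sub open_minus[OF p]
      by (intro exI[of _ "topspace X - {p}"]) (auto simp: cap_max_dirac_def)
  next
    case 3
    have "openin X (topspace X - {p} - {q})"
      using open_minus[OF p] closedin_t1_singleton[OF X q] by (simp add: openin_diff)
    then show ?thesis using 3 F_sub
      by (intro exI[of _ "topspace X - {p} - {q}"]) (auto simp: cap_max_dirac_def)
  qed
qed (use p q r in \<open>auto simp: cap_max_dirac_def\<close>)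

lemma cap_min_dirac_in_caps:
  assumes X: "t1_space X" and p: "p \<in> topspace X" and q: "q \<in> topspace X"
  shows "cap_min_dirac X p q \<in> caps X"
  unfolding caps_def capacity_def mem_Collect_eq
proof (intro conjI allI impI)
  fix F a assume "closedin X F \<and> cap_min_dirac X p q F < a"
  then have F: "closedin X F" and less: "cap_min_dirac X p q F < a" by auto
  have F_sub: "F \<subseteq> topspace X" using F closedin_subset by auto
  consider "1 < a" | x where "x \<in> {p, q}" "x \<notin> F" "0 < a"
    using less F by (fastforce simp: cap_min_dirac_def split: if_splits)
  then show "\<exists>W. openin X W \<and> F \<subseteq> W \<and>
      (\<forall>B. closedin X B \<and> B \<subseteq> W \<longrightarrow> cap_min_dirac X p q B < a)"
  proof cases
    case 1
    then show ?thesis using F_sub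
      by (intro exI[of _ "topspace X"]) (auto simp: cap_min_dirac_def)
  next
    case 2
    then have "openin X (topspace X - {x})"
      using closedin_t1_singleton[OF X] p q by (auto simp: openin_diff)
    then show ?thesis using 2 F_sub
      by (intro exI[of _ "topspace X - {x}"]) (auto simp: cap_min_dirac_def)
  qed
qed (use p q in \<open>auto simp: cap_min_dirac_def\<close>)

text \<open>On a discrete space every closed set is open, so upper semicontinuity is automatic.\<close>
lemma caps_discrete_topology:
  assumes "c U = 1" "c {} = 0" "\<And>S. \<not> S \<subseteq> U \<Longrightarrow> c S = 0"
    and mono: "\<And>S T. S \<subseteq> T \<Longrightarrow> T \<subseteq> U \<Longrightarrow> c S \<le> c T"
  shows "c \<in> caps (discrete_topology U)"
  unfolding caps_def capacity_def mem_Collect_eq closedin_discrete_topology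
    openin_discrete_topology topspace_discrete_topology
proof (intro conjI allI impI)
  fix F a assume F: "F \<subseteq> U \<and> c F < a"
  show "\<exists>W\<subseteq>U. F \<subseteq> W \<and> (\<forall>B. B \<subseteq> U \<and> B \<subseteq> W \<longrightarrow> c B < a)"
  proof (intro exI[of _ F] conjI allI impI)
    fix B assume "B \<subseteq> U \<and> B \<subseteq> F"
    then show "c B < a" using mono[of B F] F by linarith
  qed (use F in auto)
next
  fix S assume "S \<subseteq> U"
  then show "0 \<le> c S" "c S \<le> 1"
    using mono[of "{}" S] mono[of S U] assms(1,2) by auto
qed (use assms in auto)

section \<open>The map \<open>\<mu>\<^sup>\<bullet>\<close>\<close>

lemma mu_bullet_ge:
  assumes "\<And>S. C S \<le> 1" "closedin X F" "0 < t" "t \<le> 1"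
  shows "C (cap_level X F t) * t \<le> mu_bullet X C F"
proof -
  have "bdd_above {C (cap_level X F t) * t | t. t \<in> {0<..1}}"
    using assms(1) by (intro bdd_aboveI[of _ 1]) (auto intro: mult_le_one order_trans[OF _ zero_le_one] mult_nonpos_nonneg)
  then have "C (cap_level X F t) * t \<le> Sup {C (cap_level X F t) * t | t. t \<in> {0<..1}}"
    by (rule cSup_upper[rotated]) (use assms(3,4) in auto)
  then show ?thesis unfolding mu_bullet_def using assms(2) by simp
qed

lemma mu_bullet_le:
  assumes "closedin X F" "\<And>t. 0 < t \<Longrightarrow> t \<le> 1 \<Longrightarrow> C (cap_level X F t) * t \<le> b"
  shows "mu_bullet X C F \<le> b"
proof -
  have "Sup {C (cap_level X F t) * t | t. t \<in> {0<..1}} \<le> b"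
    by (rule cSup_least) (use assms(2) in \<open>auto intro: exI[of _ 1]\<close>)
  then show ?thesis unfolding mu_bullet_def using assms(1) by simp
qed

lemma mu_bullet_nonneg:
  assumes "C \<in> caps (cap_top X)"
  shows "0 \<le> mu_bullet X C F"
proof (cases "closedin X F")
  case True
  have "0 \<le> C (cap_level X F 1) * 1" using caps_nonneg[OF assms] by simp
  also have "\<dots> \<le> mu_bullet X C F"
    using caps_le_one[OF assms] True by (intro mu_bullet_ge) auto
  finally show ?thesis .
qed (simp add: mu_bullet_def)

lemma mu_bullet_le_one:
  assumes "C \<in> caps (cap_top X)"
  shows "mu_bullet X C F \<le> 1"
proof (cases "closedin X F")
  case True
  then show ?thesis
    using caps_nonneg[OF assms] caps_le_one[OF assms] by (intro mu_bullet_le) (auto intro: mult_le_one)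
qed (simp add: mu_bullet_def)

lemma cap_level_mono:
  assumes "closedin X F" "closedin X G" "F \<subseteq> G"
  shows "cap_level X F t \<subseteq> cap_level X G t"
  using capsD(6)[OF _ assms] unfolding cap_level_def by (auto intro: order_trans)

lemma cap_level_antimono: "s \<le> t \<Longrightarrow> cap_level X F t \<subseteq> cap_level X F s"
  unfolding cap_level_def by auto

lemma mu_bullet_mono:
  assumes C: "C \<in> caps (cap_top X)" and "closedin X F" "closedin X G" "F \<subseteq> G"
  shows "mu_bullet X C F \<le> mu_bullet X C G"
proof (rule mu_bullet_le[OF assms(2)])
  fix t :: real assume t: "0 < t" "t \<le> 1"
  have "C (cap_level X F t) \<le> C (cap_level X G t)"
    using capsD(6)[OF C] closedin_cap_level cap_level_mono assms(2-4) by metis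
  then have "C (cap_level X F t) * t \<le> C (cap_level X G t) * t"
    using t by (simp add: mult_right_mono)
  also have "\<dots> \<le> mu_bullet X C G"
    using caps_le_one[OF C] assms(3) t by (intro mu_bullet_ge)
  finally show "C (cap_level X F t) * t \<le> mu_bullet X C G" .
qed

lemma mu_bullet_in_caps:
  assumes closed_open: "\<And>F. closedin X F \<Longrightarrow> openin X F" and C: "C \<in> caps (cap_top X)"
  shows "mu_bullet X C \<in> caps X"
  unfolding caps_def capacity_def mem_Collect_eq
proof (intro conjI allI impI)
  have "cap_level X (topspace X) 1 = caps X"
    unfolding cap_level_def by (auto dest: capsD(4))
  then have "1 \<le> mu_bullet X C (topspace X)"
    using mu_bullet_ge[of C X "topspace X" 1] caps_le_one[OF C] capsD(4)[OF C] by simp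
  then show "mu_bullet X C (topspace X) = 1"
    using mu_bullet_le_one[OF C] by (intro antisym)
next
  have "cap_level X {} t = {}" if "0 < t" for t
    unfolding cap_level_def using that by (auto dest: capsD(5))
  then have "mu_bullet X C {} \<le> 0"
    using capsD(5)[OF C] by (intro mu_bullet_le) auto
  then show "mu_bullet X C {} = 0"
    using mu_bullet_nonneg[OF C] by (intro antisym)
next
  fix F a assume "closedin X F \<and> mu_bullet X C F < a"
  then show "\<exists>W. openin X W \<and> F \<subseteq> W \<and> (\<forall>B. closedin X B \<and> B \<subseteq> W \<longrightarrow> mu_bullet X C B < a)"
    using closed_open mu_bullet_mono[OF C] by (intro exI[of _ F]) force
next
  fix S assume "\<not> closedin X S"
  then show "mu_bullet X C S = 0" by (simp add: mu_bullet_def)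
qed (use mu_bullet_nonneg[OF C] mu_bullet_le_one[OF C] mu_bullet_mono[OF C] in auto)

text \<open>The levels \<open>F\<^sub>t\<close> decrease in \<open>t\<close>, so controlling \<open>D\<close> on the finitely many levels
  \<open>F\<^sub>k\<^sub>h\<close> controls \<open>\<mu>\<^sup>\<bullet>X(D)(F)\<close> up to an error of order \<open>h\<close>.\<close>
lemma mu_bullet_le_grid:
  assumes F: "closedin X F" and C: "C \<in> caps (cap_top X)" and D: "D \<in> caps (cap_top X)"
    and h: "0 < h"
    and grid: "\<And>k::nat. 1 \<le> k \<Longrightarrow> real k * h \<le> 1 \<Longrightarrow>
      D (cap_level X F (real k * h)) < C (cap_level X F (real k * h)) + h"
  shows "mu_bullet X D F \<le> mu_bullet X C F + 2 * h"
proof (rule mu_bullet_le[OF F])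
  fix t :: real assume t: "0 < t" "t \<le> 1"
  show "D (cap_level X F t) * t \<le> mu_bullet X C F + 2 * h"
  proof (cases "t < h")
    case True
    have "D (cap_level X F t) * t \<le> t"
      using caps_le_one[OF D] t by (simp add: mult_left_le_one_le)
    then show ?thesis
      using True h mu_bullet_nonneg[OF C, of F] by linarith
  next
    case False
    define k where "k = nat \<lfloor>t / h\<rfloor>"
    have "1 \<le> t / h" using False h by simp
    then have k_floor: "real k = \<lfloor>t / h\<rfloor>" "1 \<le> k"
      unfolding k_def by (simp_all add: le_nat_iff)
    have k_le: "real k * h \<le> t"
      using floor_divide_lower[OF h, of t] k_floor(1) by simp
    have k_gt: "t < real k * h + h"
      using floor_divide_upper[OF h, of t] k_floor(1) by (simp add: algebra_simps)
    define L where "L = cap_level X F (real k * h)"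
    have C_L: "0 \<le> C L" "C L \<le> 1"
      using caps_nonneg[OF C] caps_le_one[OF C] by auto
    have "D (cap_level X F t) \<le> D L"
      unfolding L_def using capsD(6)[OF D] closedin_cap_level[OF F] cap_level_antimono k_le
      by metis
    also have "\<dots> < C L + h"
      unfolding L_def using grid k_floor(2) k_le t by fastforce
    finally have "D (cap_level X F t) * t \<le> (C L + h) * t"
      using t by (simp add: mult_right_mono)
    also have "\<dots> = C L * t + h * t"
      by (simp add: algebra_simps)
    also have "\<dots> \<le> C L * (real k * h + h) + h"
      using C_L k_gt t h by (intro add_mono mult_left_mono mult_left_le) auto
    also have "\<dots> = C L * (real k * h) + C L * h + h"
      by (simp add: algebra_simps)
    also have "\<dots> \<le> mu_bullet X C F + h + h"
    proof (intro add_mono order_refl)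
      show "C L * (real k * h) \<le> mu_bullet X C F"
        unfolding L_def using caps_le_one[OF C] F k_floor(2) k_le t h
        by (intro mu_bullet_ge) auto
      show "C L * h \<le> h"
        using C_L h by (simp add: mult_left_le_one_le)
    qed
    finally show ?thesis by simp
  qed
qed

lemma mu_bullet_upper_semicontinuous:
  assumes F: "closedin X F" and C: "C \<in> caps (cap_top X)" and less: "mu_bullet X C F < u"
  obtains U where "openin (cap_top (cap_top X)) U" "C \<in> U" "\<And>D. D \<in> U \<Longrightarrow> mu_bullet X D F < u"
proof -
  define h where "h = (u - mu_bullet X C F) / 3"
  have h: "0 < h" and h_eq: "mu_bullet X C F + 3 * h = u"
    using less unfolding h_def by (simp_all add: field_simps)
  define L where "L k = cap_level X F (real k * h)" for k :: nat
  define K where "K = {k::nat. 1 \<le> k \<and> real k * h \<le> 1}"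
  define U where "U = caps (cap_top X) \<inter> (\<Inter>k\<in>K. {D \<in> caps (cap_top X). D (L k) < C (L k) + h})"
  have "k \<le> nat \<lceil>1 / h\<rceil>" if "k \<in> K" for k
  proof -
    have "real k \<le> 1 / h"
      using that h unfolding K_def by (simp add: field_simps)
    also have "\<dots> \<le> real (nat \<lceil>1 / h\<rceil>)"
      by (rule real_nat_ceiling_ge)
    finally show ?thesis by simp
  qed
  then have "finite K"
    by (auto intro: finite_subset[of K "{..nat \<lceil>1 / h\<rceil>}"])
  then have "openin (cap_top (cap_top X)) U"
    unfolding U_def L_def
    by (intro openin_Int_Inter) (auto intro: openin_cap_top_less closedin_cap_level[OF F])
  moreover have "C \<in> U"
    unfolding U_def using C h by simp
  moreover have "mu_bullet X D F < u" if "D \<in> U" for D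
  proof -
    have "mu_bullet X D F \<le> mu_bullet X C F + 2 * h"
      using that F C h by (intro mu_bullet_le_grid) (auto simp: U_def K_def L_def)
    then show ?thesis using h h_eq by linarith
  qed
  ultimately show ?thesis using that by blast
qed

lemma closedin_mu_bullet_ge:
  assumes F: "closedin X F"
  shows "closedin (cap_top (cap_top X)) {C \<in> caps (cap_top X). u \<le> mu_bullet X C F}"
proof -
  have "openin (cap_top (cap_top X)) {C \<in> caps (cap_top X). mu_bullet X C F < u}"
  proof (subst openin_subopen, intro ballI)
    fix C assume "C \<in> {C \<in> caps (cap_top X). mu_bullet X C F < u}"
    then obtain U where "openin (cap_top (cap_top X)) U" "C \<in> U" "\<And>D. D \<in> U \<Longrightarrow> mu_bullet X D F < u"
      using mu_bullet_upper_semicontinuous[OF F] by blast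
    then show "\<exists>T. openin (cap_top (cap_top X)) T \<and> C \<in> T \<and>
        T \<subseteq> {C \<in> caps (cap_top X). mu_bullet X C F < u}"
      using openin_subset[of "cap_top (cap_top X)" U] by (intro exI[of _ U]) auto
  qed
  moreover have "caps (cap_top X) - {C \<in> caps (cap_top X). u \<le> mu_bullet X C F}
      = {C \<in> caps (cap_top X). mu_bullet X C F < u}"
    by auto
  ultimately show ?thesis
    unfolding closedin_def by auto
qed

lemma closedin_mu_bullet_vimage_cap_level:
  assumes closed_open: "\<And>F. closedin X F \<Longrightarrow> openin X F" and F: "closedin X F"
  shows "closedin (cap_top (cap_top X)) (mu_bullet X -` cap_level X F t \<inter> caps (cap_top X))"
proof -
  have "mu_bullet X -` cap_level X F t \<inter> caps (cap_top X) =
      {C \<in> caps (cap_top X). t \<le> mu_bullet X C F}"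
    using mu_bullet_in_caps[OF closed_open] unfolding cap_level_def by auto
  then show ?thesis using closedin_mu_bullet_ge[OF F] by simp
qed

section \<open>A two-point counterexample\<close>

definition two_point :: "nat topology" where
  "two_point = discrete_topology {0, 1}"

lemma closedin_two_point [simp]: "closedin two_point S \<longleftrightarrow> S \<subseteq> {0, 1}"
  unfolding two_point_def by simp

lemma compactum_two_point: "compactum two_point"
  unfolding compactum_def two_point_def
  by (simp add: compact_space_discrete_topology Hausdorff_space_discrete_topology)

definition two_point_cap :: "real \<Rightarrow> nat set \<Rightarrow> real" where
  "two_point_cap s S = (if S = {0, 1} then 1 else if S = {0} then s else 0)"

lemma two_point_cap_in_caps:
  assumes "0 \<le> s" "s \<le> 1"
  shows "two_point_cap s \<in> caps two_point"
  unfolding two_point_def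
proof (rule caps_discrete_topology)
  fix S T :: "nat set" assume ST: "S \<subseteq> T" "T \<subseteq> {0, 1}"
  have Pow_two_point: "Pow {0::nat, 1} = {{}, {0}, {1}, {0, 1}}"
    by (simp add: Pow_insert insert_commute)
  have "S \<in> Pow {0, 1}" "T \<in> Pow {0, 1}"
    using ST by auto
  then have "S \<in> {{}, {0}, {1}, {0, 1}}" "T \<in> {{}, {0}, {1}, {0, 1}}"
    unfolding Pow_two_point .
  then show "two_point_cap s S \<le> two_point_cap s T"
    using ST assms by (elim insertE emptyE) (simp_all add: two_point_cap_def)
qed (auto simp: two_point_cap_def)

lemma two_point_cap_in_cap_level:
  assumes "0 \<le> s" "s \<le> 1"
  shows "two_point_cap s \<in> cap_level two_point {0} u \<longleftrightarrow> u \<le> s"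
  using two_point_cap_in_caps[OF assms] unfolding cap_level_def two_point_cap_def by auto

definition \<C>\<^sub>1 :: "(nat set \<Rightarrow> real) set \<Rightarrow> real" where
  "\<C>\<^sub>1 = cap_max_dirac (cap_top two_point) (two_point_cap (1/2)) (two_point_cap (1/2)) 0"

definition \<C>\<^sub>2 :: "(nat set \<Rightarrow> real) set \<Rightarrow> real" where
  "\<C>\<^sub>2 = cap_max_dirac (cap_top two_point) (two_point_cap 0) (two_point_cap 1) (1/2)"

definition \<G> :: "((nat set \<Rightarrow> real) set \<Rightarrow> real) set \<Rightarrow> real" where
  "\<G> = cap_min_dirac (cap_top (cap_top two_point)) \<C>\<^sub>1 \<C>\<^sub>2"

lemma \<C>\<^sub>1_in_caps: "\<C>\<^sub>1 \<in> caps (cap_top two_point)"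
  unfolding \<C>\<^sub>1_def using two_point_cap_in_caps[of "1/2"]
  by (intro cap_max_dirac_in_caps t1_space_cap_top) auto

lemma \<C>\<^sub>2_in_caps: "\<C>\<^sub>2 \<in> caps (cap_top two_point)"
  unfolding \<C>\<^sub>2_def using two_point_cap_in_caps[of 0] two_point_cap_in_caps[of 1]
  by (intro cap_max_dirac_in_caps t1_space_cap_top) auto

lemma \<G>_in_caps: "\<G> \<in> caps (cap_top (cap_top two_point))"
  unfolding \<G>_def using \<C>\<^sub>1_in_caps \<C>\<^sub>2_in_caps
  by (intro cap_min_dirac_in_caps t1_space_cap_top) auto

lemma \<C>\<^sub>1_cap_level:
  "\<C>\<^sub>1 (cap_level two_point {0} u) = (if u \<le> 1/2 then 1 else 0)"
  unfolding \<C>\<^sub>1_def cap_max_dirac_def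
  using closedin_cap_level[of two_point "{0}" u] two_point_cap_in_cap_level[of "1/2" u] by simp

lemma \<C>\<^sub>2_cap_level:
  assumes "0 < u" "u \<le> 1"
  shows "\<C>\<^sub>2 (cap_level two_point {0} u) = 1/2"
  unfolding \<C>\<^sub>2_def cap_max_dirac_def
  using closedin_cap_level[of two_point "{0}" u] two_point_cap_in_cap_level[of 0 u]
    two_point_cap_in_cap_level[of 1 u] assms by simp

lemma half_le_mu_bullet_\<C>\<^sub>1: "1/2 \<le> mu_bullet two_point \<C>\<^sub>1 {0}"
  using mu_bullet_ge[of \<C>\<^sub>1 two_point "{0}" "1/2"] caps_le_one[OF \<C>\<^sub>1_in_caps]
  by (simp add: \<C>\<^sub>1_cap_level)

lemma half_le_mu_bullet_\<C>\<^sub>2: "1/2 \<le> mu_bullet two_point \<C>\<^sub>2 {0}"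
  using mu_bullet_ge[of \<C>\<^sub>2 two_point "{0}" 1] caps_le_one[OF \<C>\<^sub>2_in_caps]
  by (simp add: \<C>\<^sub>2_cap_level)

lemma mu_bullet_mu_bullet_\<G>_le: "mu_bullet two_point (mu_bullet (cap_top two_point) \<G>) {0} \<le> 1/4"
proof (rule mu_bullet_le)
  fix u :: real assume u: "0 < u" "u \<le> 1"
  let ?A = "cap_level two_point {0} u"
  have D_le: "mu_bullet (cap_top two_point) \<G> ?A \<le> (if u \<le> 1/2 then 1/2 else 0)"
  proof (rule mu_bullet_le)
    show "closedin (cap_top two_point) ?A" by (simp add: closedin_cap_level)
    fix t :: real assume t: "0 < t" "t \<le> 1"
    have "closedin (cap_top (cap_top two_point)) (cap_level (cap_top two_point) ?A t)"
      by (simp add: closedin_cap_level)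
    moreover have "\<C> \<in> cap_level (cap_top two_point) ?A t \<longleftrightarrow> t \<le> \<C> ?A"
      if "\<C> \<in> caps (cap_top two_point)" for \<C>
      using that by (simp add: cap_level_def)
    ultimately have "\<G> (cap_level (cap_top two_point) ?A t) = (if u \<le> 1/2 \<and> t \<le> 1/2 then 1 else 0)"
      using \<C>\<^sub>1_in_caps \<C>\<^sub>2_in_caps u t
      by (simp add: \<G>_def cap_min_dirac_def \<C>\<^sub>1_cap_level \<C>\<^sub>2_cap_level)
    then show "\<G> (cap_level (cap_top two_point) ?A t) * t \<le> (if u \<le> 1/2 then 1/2 else 0)"
      using t by auto
  qed
  have D_nonneg: "0 \<le> mu_bullet (cap_top two_point) \<G> ?A"
    by (rule mu_bullet_nonneg[OF \<G>_in_caps])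
  show "mu_bullet (cap_top two_point) \<G> ?A * u \<le> 1/4"
  proof (cases "u \<le> 1/2")
    case True
    then have "mu_bullet (cap_top two_point) \<G> ?A * u \<le> 1/2 * (1/2)"
      using D_le D_nonneg u by (intro mult_mono) auto
    then show ?thesis by simp
  next
    case False
    then show ?thesis using D_le D_nonneg by simp
  qed
qed simp

lemma half_le_mu_bullet_cap_map_\<G>:
  "1/2 \<le> mu_bullet two_point (cap_map (cap_top (cap_top two_point)) (cap_top two_point) (mu_bullet two_point) \<G>) {0}"
proof -
  let ?A = "cap_level two_point {0} (1/2)"
  let ?P = "mu_bullet two_point -` ?A \<inter> caps (cap_top two_point)"
  let ?N = "cap_map (cap_top (cap_top two_point)) (cap_top two_point) (mu_bullet two_point) \<G>"
  have P_closed: "closedin (cap_top (cap_top two_point)) ?P"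
    unfolding two_point_def by (rule closedin_mu_bullet_vimage_cap_level) simp_all
  have "mu_bullet two_point \<C> \<in> ?A" if "\<C> \<in> caps (cap_top two_point)" "1/2 \<le> mu_bullet two_point \<C> {0}" for \<C>
    using that mu_bullet_in_caps[of two_point] unfolding cap_level_def two_point_def by auto
  then have "\<C>\<^sub>1 \<in> ?P" "\<C>\<^sub>2 \<in> ?P"
    using \<C>\<^sub>1_in_caps \<C>\<^sub>2_in_caps half_le_mu_bullet_\<C>\<^sub>1 half_le_mu_bullet_\<C>\<^sub>2 by auto
  then have "?N ?A = 1"
    using P_closed by (simp add: cap_map_def closedin_cap_level \<G>_def cap_min_dirac_def)
  moreover have "?N ?A * (1/2) \<le> mu_bullet two_point ?N {0}"
    using caps_le_one[OF \<G>_in_caps] by (intro mu_bullet_ge) (auto simp: cap_map_def)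
  ultimately show ?thesis by simp
qed

theorem proposition1:
  shows "\<exists>(X :: nat topology) G.
    compactum X \<and> G \<in> caps (cap_top (cap_top X)) \<and>
    mu_bullet X (mu_bullet (cap_top X) G)
      \<noteq> mu_bullet X (cap_map (cap_top (cap_top X)) (cap_top X) (mu_bullet X) G)"
proof (intro exI conjI)
  show "compactum two_point" by (rule compactum_two_point)
  show "\<G> \<in> caps (cap_top (cap_top two_point))" by (rule \<G>_in_caps)
  have "mu_bullet two_point (mu_bullet (cap_top two_point) \<G>) {0}
      \<noteq> mu_bullet two_point (cap_map (cap_top (cap_top two_point)) (cap_top two_point) (mu_bullet two_point) \<G>) {0}"
    using mu_bullet_mu_bullet_\<G>_le half_le_mu_bullet_cap_map_\<G> by linarith
  then show "mu_bullet two_point (mu_bullet (cap_top two_point) \<G>)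
      \<noteq> mu_bullet two_point (cap_map (cap_top (cap_top two_point)) (cap_top two_point) (mu_bullet two_point) \<G>)"
    by metis
qed

end
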